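(* Let $F$ be a probability measure on $[-a,a]$ and $\sigma>0$ with $\sigma<a$. Let $\varepsilon\in(0,\pi^{-1/2})$. Then there exists a discrete probability distribution $F'$ on $[-a,a]$ with at most $54\,a\,\sigma^{-1}e^2\big[1\vee\ln\big(\frac{1}{\sqrt\pi\,\varepsilon}\big)\big]$ support points such that $$\|F*\psi_\sigma-F'*\psi_\sigma\|_\infty\le\frac{2\varepsilon}{\sigma}.$$
   Context: $\psi(x)=\pi^{-1/2}e^{-x^2}$, $\psi_\sigma(x)=\sigma^{-1}\psi(x/\sigma)$, and for a measure $F$, $F*\psi_\sigma(x)=\int\psi_\sigma(x-u)\,dF(u)$. *)

theory Defs
  imports "HOL-Probability.Probability"
begin

definition psi :: "real \<Rightarrow> real" where
  "psi x = exp (- (x^2)) / sqrt pi"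

definition psi_sigma :: "real \<Rightarrow> real \<Rightarrow> real" where
  "psi_sigma \<sigma> x = psi (x / \<sigma>) / \<sigma>"

definition conv_psi :: "real measure \<Rightarrow> real \<Rightarrow> real \<Rightarrow> real" where
  "conv_psi F \<sigma> x = (\<integral>u. psi_sigma \<sigma> (x - u) \<partial>F)"

end

theory Submission
  imports Defs "HOL-Complex_Analysis.Complex_Analysis" "HOL-Library.Function_Algebras"
begin

(* Quantizing F onto a grid of mesh \<sigma>\<delta> moves F * \<psi>\<^sub>\<sigma> by at most \<delta>/(\<sigma> sqrt pi), because
   \<psi>\<^sub>\<sigma> is Lipschitz with constant 1/(\<sigma>\<^sup>2 sqrt pi). Next cut [-a,a] into m \<approx> a e/\<sigma> cells of
   radius at most \<sigma>/e. Inside each cell a Caratheodory argument keeps at most L + 1 atoms while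
   preserving the moments of order \<le> L about the cell centre. As z \<mapsto> exp (-(s - z)\<^sup>2) is entire
   and bounded by e on the unit disc, Cauchy's estimates bound its Taylor coefficients by e, so the
   degree-L Taylor polynomial is within e r\<^sup>L\<^sup>+\<^sup>1/(1 - r) of it for |t| \<le> r = 1/e. Matched moments
   annihilate the polynomial part, and L \<approx> ln (1/(sqrt pi \<epsilon>)) makes the remainder at most \<epsilon>/\<sigma>. *)

interpretation seq_space: vector_space "\<lambda>(r::real) (f::nat\<Rightarrow>real). (\<lambda>i. r * f i)"
  by unfold_locales (auto simp: fun_eq_iff algebra_simps)

lemma sum_fun_apply: "(\<Sum>x\<in>A. (f x :: 'a \<Rightarrow> 'b::comm_monoid_add)) n = (\<Sum>x\<in>A. f x n)"
  by (induction A rule: infinite_finite_induct) auto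

lemma exists_vanishing_moments:
  fixes U :: "real set" and c :: real
  assumes fin: "finite U" and cU: "card U = L + 2" and L1: "L \<ge> 1"
  shows "\<exists>u. (\<exists>y\<in>U. u y \<noteq> 0) \<and> (\<forall>n\<le>L. (\<Sum>y\<in>U. u y * (y - c)^n) = 0)"
proof -
  define vv where "vv y = (\<lambda>n::nat. if n \<le> L then (y-c)^n else (0::real))" for y
  define e where "e k = (\<lambda>n::nat. if n = k then 1 else (0::real))" for k
  have inj: "inj_on vv U"
  proof
    fix x y assume "vv x = vv y"
    hence "vv x 1 = vv y 1" by simp
    thus "x = y" using L1 by (simp add: vv_def)
  qed
  have vvsum: "vv y = (\<Sum>k\<le>L. (\<lambda>i. (y-c)^k * e k i))" for y
    by (rule ext) (auto simp: vv_def e_def sum_fun_apply if_distrib cong: if_cong)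
  have sp: "vv ` U \<subseteq> seq_space.span (e ` {..L})"
  proof
    fix v assume "v \<in> vv ` U"
    then obtain y where v: "v = vv y" by auto
    show "v \<in> seq_space.span (e ` {..L})"
      unfolding v vvsum
      by (intro seq_space.span_sum seq_space.span_scale seq_space.span_base) auto
  qed
  have "seq_space.dependent (vv ` U)"
  proof (rule ccontr)
    assume "\<not> seq_space.dependent (vv ` U)"
    from seq_space.independent_span_bound[OF _ this sp]
    have "card (vv ` U) \<le> card (e ` {..L})" by auto
    also have "\<dots> \<le> L + 1" using card_image_le[of "{..L}" e] by auto
    finally show False using card_image[OF inj] cU by simp
  qed
  then obtain u where u: "\<exists>v\<in>vv ` U. u v \<noteq> 0" "(\<Sum>v\<in>vv ` U. (\<lambda>i. u v * v i)) = 0"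
    using seq_space.dependent_finite[of "vv ` U"] fin by auto
  show ?thesis
  proof (intro exI conjI allI impI)
    show "\<exists>y\<in>U. (u \<circ> vv) y \<noteq> 0" using u(1) by auto
    fix n assume n: "n \<le> L"
    have "0 = (\<Sum>v\<in>vv ` U. (\<lambda>i. u v * v i)) n" using u(2) by simp
    also have "\<dots> = (\<Sum>y\<in>U. u (vv y) * vv y n)"
      by (simp add: sum_fun_apply sum.reindex[OF inj])
    also have "\<dots> = (\<Sum>y\<in>U. (u \<circ> vv) y * (y - c)^n)" using n by (simp add: vv_def)
    finally show "(\<Sum>y\<in>U. (u \<circ> vv) y * (y - c)^n) = 0" by simp
  qed
qed

lemma moment_preserving_support_reduction_step:
  fixes S :: "real set" and w :: "real \<Rightarrow> real" and c :: real
  assumes fin: "finite S" and L1: "L \<ge> 1" and wnn: "\<forall>y\<in>S. w y \<ge> 0"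
    and big: "card {y\<in>S. w y \<noteq> 0} > L + 1"
  shows "\<exists>w'. (\<forall>y\<in>S. w' y \<ge> 0) \<and> {y\<in>S. w' y \<noteq> 0} \<subset> {y\<in>S. w y \<noteq> 0} \<and>
     (\<forall>n\<le>L. (\<Sum>y\<in>S. w' y * (y-c)^n) = (\<Sum>y\<in>S. w y * (y-c)^n))"
proof -
  define T where "T = {y\<in>S. w y \<noteq> 0}"
  obtain U where U: "U \<subseteq> T" "card U = L + 2" "finite U"
    using obtain_subset_with_card_n[of "L+2" T] big T_def by force
  obtain u where u: "\<exists>y\<in>U. u y \<noteq> 0" "\<forall>n\<le>L. (\<Sum>y\<in>U. u y * (y - c)^n) = 0"
    using exists_vanishing_moments[OF U(3) U(2) L1, of c] by blast
  have "\<exists>y\<in>U. u y > 0"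
  proof (rule ccontr)
    assume "\<not> ?thesis"
    moreover have "(\<Sum>y\<in>U. - u y) = 0" using u(2)[rule_format, of 0] by (simp add: sum_negf)
    ultimately have "\<forall>y\<in>U. - u y = 0"
      using sum_nonneg_eq_0_iff[OF U(3), of "\<lambda>y. - u y"] by (simp add: not_less)
    thus False using u(1) by auto
  qed
  define P where "P = {y\<in>U. u y > 0}"
  have finP: "finite P" "P \<noteq> {}" using U(3) \<open>\<exists>y\<in>U. u y > 0\<close> by (auto simp: P_def)
  \<comment> \<open>Move along the kernel direction \<open>-u\<close> until the first positive-direction weight hits zero.\<close>
  define \<tau> where "\<tau> = Min ((\<lambda>y. w y / u y) ` P)"
  have "\<tau> \<in> (\<lambda>y. w y / u y) ` P"
    unfolding \<tau>_def using finP by (intro Min_in) auto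
  then obtain ys where ys: "ys \<in> P" "\<tau> = w ys / u ys" by auto
  have \<tau>_le: "\<tau> \<le> w y / u y" if "y \<in> P" for y
    unfolding \<tau>_def using finP that by auto
  have wpos: "w y > 0" if "y \<in> T" for y using that wnn T_def by force
  have \<tau>_nonneg: "\<tau> \<ge> 0" using ys wpos[of ys] U(1) by (auto simp: P_def intro!: divide_nonneg_pos)
  define u0 where "u0 y = (if y \<in> U then u y else 0)" for y
  define w' where "w' y = w y - \<tau> * u0 y" for y
  have "w' y \<ge> 0" if yS: "y \<in> S" for y
  proof (cases "y \<in> P")
    case True
    hence "\<tau> * u y \<le> w y" "y \<in> U" using \<tau>_le[OF True] by (auto simp: P_def field_simps)
    thus ?thesis by (simp add: w'_def u0_def)
  next
    case False
    hence "\<tau> * u0 y \<le> 0" using \<tau>_nonneg by (auto simp: P_def u0_def mult_nonneg_nonpos)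
    moreover have "w y \<ge> 0" using wnn yS by blast
    ultimately show ?thesis by (simp add: w'_def)
  qed
  moreover have "{y\<in>S. w' y \<noteq> 0} \<subset> T"
  proof -
    have "{y\<in>S. w' y \<noteq> 0} \<subseteq> T - {ys}"
      using ys U(1) by (auto simp: w'_def u0_def P_def T_def)
    moreover have "ys \<in> T" using ys U(1) P_def by auto
    ultimately show ?thesis by blast
  qed
  moreover have "(\<Sum>y\<in>S. w' y * (y-c)^n) = (\<Sum>y\<in>S. w y * (y-c)^n)" if n: "n \<le> L" for n
  proof -
    have US: "U \<subseteq> S" using U(1) T_def by auto
    have "(\<Sum>y\<in>S. u0 y * (y-c)^n) = (\<Sum>y\<in>U. u y * (y-c)^n)"
      using sum.inter_restrict[OF fin, of "\<lambda>y. u y * (y-c)^n" U] US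
      by (simp add: u0_def Int_absorb1 if_distrib[of "\<lambda>v. v * _"] cong: if_cong)
    also have "\<dots> = 0" using u(2) n by auto
    finally have "(\<Sum>y\<in>S. u0 y * (y-c)^n) = 0" .
    thus ?thesis
      by (simp add: w'_def left_diff_distrib sum_subtractf sum_distrib_left[symmetric] mult.assoc)
  qed
  ultimately show ?thesis unfolding T_def by blast
qed

lemma moment_preserving_support_reduction:
  fixes S :: "real set" and w :: "real \<Rightarrow> real" and c :: real
  assumes fin: "finite S" and L1: "L \<ge> 1" and wnn: "\<forall>y\<in>S. w y \<ge> 0"
  shows "\<exists>w'. (\<forall>y\<in>S. w' y \<ge> 0) \<and> card {y\<in>S. w' y \<noteq> 0} \<le> L + 1 \<and>
     (\<forall>n\<le>L. (\<Sum>y\<in>S. w' y * (y-c)^n) = (\<Sum>y\<in>S. w y * (y-c)^n))"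
  using wnn
proof (induction "card {y\<in>S. w y \<noteq> 0}" arbitrary: w rule: less_induct)
  case (less w)
  show ?case
  proof (cases "card {y\<in>S. w y \<noteq> 0} \<le> L + 1")
    case True
    thus ?thesis using less.prems by blast
  next
    case False
    then have "card {y\<in>S. w y \<noteq> 0} > L + 1" by simp
    from moment_preserving_support_reduction_step[OF fin L1 less.prems this]
    obtain w2 where w2: "\<forall>y\<in>S. w2 y \<ge> 0" "{y\<in>S. w2 y \<noteq> 0} \<subset> {y\<in>S. w y \<noteq> 0}"
      "\<forall>n\<le>L. (\<Sum>y\<in>S. w2 y * (y-c)^n) = (\<Sum>y\<in>S. w y * (y-c)^n)"
      by blast
    have "card {y\<in>S. w2 y \<noteq> 0} < card {y\<in>S. w y \<noteq> 0}"
      by (rule psubset_card_mono[OF _ w2(2)]) (use fin in simp)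
    from less.hyps[OF this w2(1)] show ?thesis using w2(3) by auto
  qed
qed

lemma Re_minus_square_diff_le: "Re (- ((complex_of_real s - z)^2)) \<le> (norm z)^2"
proof -
  have "Re (- ((complex_of_real s - z)^2)) = (Im z)^2 - (s - Re z)^2"
    by (simp add: power2_eq_square algebra_simps)
  also have "\<dots> \<le> (Im z)^2" by simp
  also have "\<dots> \<le> (norm z)^2" using abs_Im_le_cmod[of z] by (metis abs_ge_zero power2_abs power_mono)
  finally show ?thesis .
qed

lemma gaussian_taylor_coeff_bound:
  fixes s :: real
  defines "f \<equiv> \<lambda>z. exp (- ((complex_of_real s - z)^2))"
  shows "norm ((deriv ^^ n) f 0 / fact n) \<le> exp 1"
proof -
  have hol: "f holomorphic_on A" for A unfolding f_def by (intro holomorphic_intros)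
  have "norm ((deriv ^^ n) f 0) \<le> fact n * exp 1 / 1^n"
  proof (rule Cauchy_inequality)
    show "continuous_on (cball 0 1) f" using hol holomorphic_on_imp_continuous_on by blast
    fix x :: complex assume "norm (0 - x) = 1"
    hence nx: "norm x = 1" by simp
    have "norm (f x) = exp (Re (- ((complex_of_real s - x)^2)))" by (simp add: f_def)
    also have "\<dots> \<le> exp 1" using Re_minus_square_diff_le[of s x] nx by simp
    finally show "norm (f x) \<le> exp 1" .
  qed (use hol in auto)
  thus ?thesis by (simp add: norm_divide field_simps)
qed

lemma gaussian_polynomial_approx:
  fixes s r :: real and L :: nat
  assumes r: "0 \<le> r" "r < 1"
  shows "\<exists>\<alpha>::nat\<Rightarrow>real. \<forall>t::real. \<bar>t\<bar> \<le> r \<longrightarrow>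
     \<bar>exp (-((s-t)^2)) - (\<Sum>n\<le>L. \<alpha> n * t^n)\<bar> \<le> exp 1 * r^(L+1) / (1 - r)"
proof -
  define f where "f z = exp (- ((complex_of_real s - z)^2))" for z
  have hol: "f holomorphic_on A" for A unfolding f_def by (intro holomorphic_intros)
  define a where "a n = (deriv ^^ n) f 0 / fact n" for n
  have coeff_le: "norm (a n) \<le> exp 1" for n
    unfolding a_def f_def by (rule gaussian_taylor_coeff_bound)
  define \<alpha> where "\<alpha> n = Re (a n)" for n
  show ?thesis
  proof (intro exI allI impI)
    fix t :: real assume t: "\<bar>t\<bar> \<le> r"
    have sums: "(\<lambda>n. a n * (complex_of_real t)^n) sums f (complex_of_real t)"
      using holomorphic_power_series[OF hol[of "ball 0 2"], of "complex_of_real t"] t r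
      by (simp add: a_def)
    define g where "g n = a (n + (L+1)) * (complex_of_real t)^(n + (L+1))" for n
    have tail_sums: "g sums (f t - (\<Sum>n<L+1. a n * (complex_of_real t)^n))"
      unfolding g_def by (rule sums_split_initial_segment[OF sums])
    have tail_le: "norm (g n) \<le> exp 1 * r^(L+1) * r^n" for n
    proof -
      have "norm (g n) = norm (a (n + (L+1))) * \<bar>t\<bar>^(n+(L+1))"
        by (simp add: g_def norm_mult norm_power)
      also have "\<dots> \<le> exp 1 * r^(n+(L+1))"
        by (intro mult_mono coeff_le power_mono t) auto
      finally show ?thesis by (simp add: power_add mult_ac)
    qed
    have geometric: "(\<lambda>n. exp 1 * r^(L+1) * r^n) sums (exp 1 * r^(L+1) * (1 / (1 - r)))"
      by (intro sums_mult geometric_sums) (use r in auto)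
    have "norm (f t - (\<Sum>n<L+1. a n * (complex_of_real t)^n)) \<le> exp 1 * r^(L+1) * (1 / (1 - r))"
      using norm_suminf_le[OF tail_le sums_summable[OF geometric]] sums_unique[OF tail_sums] sums_unique[OF geometric] by simp
    moreover have "Re (f t - (\<Sum>n<L+1. a n * (complex_of_real t)^n)) =
        exp (-((s-t)^2)) - (\<Sum>n\<le>L. \<alpha> n * t^n)"
    proof -
      have "Re (f t) = exp (-((s-t)^2))"
        unfolding f_def by (simp flip: of_real_diff of_real_power of_real_minus add: exp_of_real del: of_real_diff of_real_power)
      moreover have "Re (a n * (complex_of_real t)^n) = \<alpha> n * t^n" for n
        by (simp add: \<alpha>_def flip: of_real_power)
      ultimately show ?thesis using lessThan_Suc_atMost by (simp add: Re_sum \<alpha>_def)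
    qed
    ultimately show "\<bar>exp (-((s-t)^2)) - (\<Sum>n\<le>L. \<alpha> n * t^n)\<bar> \<le> exp 1 * r^(L+1) / (1 - r)"
      using abs_Re_le_cmod[of "f t - (\<Sum>n<L+1. a n * (complex_of_real t)^n)"] by simp
  qed
qed

lemma moment_matching_gaussian_error:
  fixes S :: "real set" and w w' :: "real \<Rightarrow> real" and c \<sigma> r x :: real
  assumes fin: "finite S" and Sc: "\<And>y. y \<in> S \<Longrightarrow> \<bar>y - c\<bar> \<le> \<sigma> * r"
    and \<sigma>: "0 < \<sigma>" and r: "0 \<le> r" "r < 1"
    and wnn: "\<And>y. y \<in> S \<Longrightarrow> w y \<ge> 0" and w'nn: "\<And>y. y \<in> S \<Longrightarrow> w' y \<ge> 0"
    and mom: "\<forall>n\<le>L. (\<Sum>y\<in>S. w' y * (y-c)^n) = (\<Sum>y\<in>S. w y * (y-c)^n)"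
  shows "\<bar>\<Sum>y\<in>S. (w y - w' y) * exp (-(((x-y)/\<sigma>)^2))\<bar>
          \<le> exp 1 * r^(L+1) / (1 - r) * ((\<Sum>y\<in>S. w y) + (\<Sum>y\<in>S. w' y))"
proof -
  define B where "B = exp 1 * r^(L+1) / (1 - r)"
  obtain \<alpha> where \<alpha>: "\<And>t. \<bar>t\<bar> \<le> r \<Longrightarrow>
     \<bar>exp (-(((x-c)/\<sigma> - t)^2)) - (\<Sum>n\<le>L. \<alpha> n * t^n)\<bar> \<le> B"
    using gaussian_polynomial_approx[OF r, of "(x-c)/\<sigma>" L] unfolding B_def by blast
  define P where "P y = (\<Sum>n\<le>L. \<alpha> n * ((y-c)/\<sigma>)^n)" for y
  have approx: "\<bar>exp (-(((x-y)/\<sigma>)^2)) - P y\<bar> \<le> B" if "y \<in> S" for y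
  proof -
    have "\<bar>(y-c)/\<sigma>\<bar> \<le> r" using Sc[OF that] \<sigma> by (simp add: abs_divide field_simps)
    moreover have "(x-c)/\<sigma> - (y-c)/\<sigma> = (x-y)/\<sigma>" using \<sigma> by (simp add: field_simps)
    ultimately show ?thesis using \<alpha>[of "(y-c)/\<sigma>"] unfolding P_def by simp
  qed
  have moments_cancel: "(\<Sum>y\<in>S. (w y - w' y) * P y) = 0"
  proof -
    have "(\<Sum>y\<in>S. (w y - w' y) * P y) = (\<Sum>n\<le>L. \<alpha> n / \<sigma>^n * (\<Sum>y\<in>S. (w y - w' y) * (y-c)^n))"
      unfolding P_def sum_distrib_left by (subst sum.swap) (auto intro!: sum.cong simp: power_divide field_simps)
    also have "\<dots> = 0" using mom by (simp add: left_diff_distrib sum_subtractf)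
    finally show ?thesis .
  qed
  have "(\<Sum>y\<in>S. (w y - w' y) * exp (-(((x-y)/\<sigma>)^2))) =
        (\<Sum>y\<in>S. (w y - w' y) * (exp (-(((x-y)/\<sigma>)^2)) - P y))"
    using moments_cancel by (simp add: right_diff_distrib sum_subtractf)
  also have "\<bar>\<dots>\<bar> \<le> (\<Sum>y\<in>S. \<bar>(w y - w' y) * (exp (-(((x-y)/\<sigma>)^2)) - P y)\<bar>)"
    by (rule sum_abs)
  also have "\<dots> \<le> (\<Sum>y\<in>S. (w y + w' y) * B)"
  proof (rule sum_mono)
    fix y assume y: "y \<in> S"
    have "\<bar>w y - w' y\<bar> \<le> w y + w' y" using wnn[OF y] w'nn[OF y] by linarith
    thus "\<bar>(w y - w' y) * (exp (-(((x-y)/\<sigma>)^2)) - P y)\<bar> \<le> (w y + w' y) * B"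
      unfolding abs_mult by (intro mult_mono approx y) auto
  qed
  also have "\<dots> = B * ((\<Sum>y\<in>S. w y) + (\<Sum>y\<in>S. w' y))"
    by (simp add: sum_distrib_left[symmetric] sum.distrib mult_ac)
  finally show ?thesis unfolding B_def .
qed

lemma gaussian_lipschitz: "\<bar>exp (-(p^2)) - exp (-(q^2))\<bar> \<le> \<bar>p - q\<bar>" for p q :: real
proof -
  have deriv: "((\<lambda>z. exp (-(z^2))) has_real_derivative (- 2 * z * exp (-(z^2)))) (at z)" for z :: real
    by (auto intro!: derivative_eq_intros simp: power2_eq_square)
  have deriv_le: "\<bar>- 2 * z * exp (-(z^2))\<bar> \<le> 1" for z :: real
  proof -
    have "0 \<le> (\<bar>z\<bar> - 1)^2" by simp
    hence "2 * \<bar>z\<bar> \<le> 1 + \<bar>z\<bar>^2" by (simp add: power2_eq_square algebra_simps)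
    hence "2 * \<bar>z\<bar> \<le> 1 + z^2" by simp
    also have "\<dots> \<le> exp (z^2)" using exp_ge_add_one_self by (simp add: add.commute)
    finally have "2 * \<bar>z\<bar> * exp (-(z^2)) \<le> exp (z^2) * exp (-(z^2))" by (simp add: mult_right_mono)
    also have "\<dots> = 1" by (simp add: exp_minus field_simps)
    finally show ?thesis by (simp add: abs_mult)
  qed
  have ordered: "\<bar>exp (-(b^2)) - exp (-(a^2))\<bar> \<le> b - a" if ab: "a < b" for a b :: real
  proof -
    obtain z where "a < z" "z < b" "exp (-(b^2)) - exp (-(a^2)) = (b - a) * (- 2 * z * exp (-(z^2)))"
      using MVT2[OF ab, of "\<lambda>z. exp (-(z^2))" "\<lambda>z. - 2 * z * exp (-(z^2))"] deriv by blast
    hence "\<bar>exp (-(b^2)) - exp (-(a^2))\<bar> = (b - a) * \<bar>- 2 * z * exp (-(z^2))\<bar>"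
      using ab by (simp add: abs_mult)
    also have "\<dots> \<le> (b - a) * 1" using deriv_le[of z] ab by (intro mult_left_mono) auto
    finally show ?thesis by simp
  qed
  show ?thesis
    using ordered[of p q] ordered[of q p] by (cases p q rule: linorder_cases) (auto simp: abs_minus_commute)
qed

lemma psi_sigma_lipschitz:
  assumes "0 < \<sigma>"
  shows "\<bar>psi_sigma \<sigma> (x - u) - psi_sigma \<sigma> (x - v)\<bar> \<le> \<bar>u - v\<bar> / (\<sigma>^2 * sqrt pi)"
proof -
  have "\<bar>psi_sigma \<sigma> (x - u) - psi_sigma \<sigma> (x - v)\<bar> =
        \<bar>exp (-(((x-u)/\<sigma>)^2)) - exp (-(((x-v)/\<sigma>)^2))\<bar> / (\<sigma> * sqrt pi)"
    using assms by (simp add: psi_sigma_def psi_def diff_divide_distrib[symmetric] abs_divide field_simps)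
  also have "\<dots> \<le> \<bar>(x-u)/\<sigma> - (x-v)/\<sigma>\<bar> / (\<sigma> * sqrt pi)"
    using assms by (intro divide_right_mono gaussian_lipschitz) auto
  also have "\<bar>(x-u)/\<sigma> - (x-v)/\<sigma>\<bar> = \<bar>u - v\<bar> / \<sigma>"
    using assms by (simp add: diff_divide_distrib[symmetric] abs_divide abs_minus_commute)
  finally show ?thesis using assms by (simp add: power2_eq_square field_simps)
qed

lemma psi_sigma_shift_measurable[measurable]: "(\<lambda>u. psi_sigma \<sigma> (x - u)) \<in> borel_measurable borel"
  unfolding psi_sigma_def psi_def by measurable

lemma abs_psi_sigma_le: "0 < \<sigma> \<Longrightarrow> \<bar>psi_sigma \<sigma> y\<bar> \<le> 1 / (\<sigma> * sqrt pi)"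
  by (simp add: psi_sigma_def psi_def abs_divide field_simps)

lemma integral_indicator_finite_range:
  fixes M :: "'a measure" and q :: "'a \<Rightarrow> real" and h :: "real \<Rightarrow> real"
  assumes M: "finite_measure M" and A: "A \<in> sets M" and q: "q \<in> borel_measurable M"
    and G: "finite G" "q ` A \<subseteq> G"
  shows "(\<integral>u. h (q u) * indicator A u \<partial>M) = (\<Sum>g\<in>G. measure M {u\<in>A. q u = g} * h g)"
proof -
  have fibre: "{u\<in>A. q u = g} \<in> sets M" for g
  proof -
    have "{u\<in>A. q u = g} = A \<inter> {u\<in>space M. q u = g}" using sets.sets_into_space[OF A] by auto
    also have "\<dots> \<in> sets M" using A q by measurable
    finally show ?thesis .
  qed
  have "h (q u) * indicator A u = (\<Sum>g\<in>G. h g * indicator {u\<in>A. q u = g} u)" for u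
  proof (cases "u \<in> A")
    case True
    hence "(\<Sum>g\<in>G. h g * indicator {u\<in>A. q u = g} u) = (\<Sum>g\<in>G. if g = q u then h g else 0)"
      by (intro sum.cong) auto
    also have "\<dots> = h (q u)" using True G by (auto simp: sum.delta')
    finally show ?thesis using True by simp
  qed simp
  hence "(\<integral>u. h (q u) * indicator A u \<partial>M) = (\<integral>u. (\<Sum>g\<in>G. h g * indicator {u\<in>A. q u = g} u) \<partial>M)"
    by simp
  also have "\<dots> = (\<Sum>g\<in>G. \<integral>u. h g * indicator {u\<in>A. q u = g} u \<partial>M)"
    by (intro Bochner_Integration.integral_sum integrable_mult_right integrable_real_indicator fibre)
       (simp add: finite_measure.emeasure_finite[OF M] less_top[symmetric])
  also have "\<dots> = (\<Sum>g\<in>G. measure M {u\<in>A. q u = g} * h g)"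
    using fibre by (simp add: mult.commute)
  finally show ?thesis .
qed

lemma conv_psi_displacement:
  fixes F :: "real measure" and q :: "real \<Rightarrow> real"
  assumes F: "prob_space F" "sets F = sets borel" and q: "q \<in> borel_measurable borel"
    and close: "\<And>u. \<bar>u - q u\<bar> \<le> d" and \<sigma>: "0 < \<sigma>"
  shows "\<bar>conv_psi F \<sigma> x - (\<integral>u. psi_sigma \<sigma> (x - q u) \<partial>F)\<bar> \<le> d / (\<sigma>^2 * sqrt pi)"
proof -
  interpret prob_space F by (rule F(1))
  have [measurable_cong]: "sets F = sets borel" by (rule F(2))
  have int: "integrable F (\<lambda>u. psi_sigma \<sigma> (x - f u))" if [measurable]: "f \<in> borel_measurable borel" for f
    by (rule integrable_const_bound[where B="1 / (\<sigma> * sqrt pi)"]) (use abs_psi_sigma_le[OF \<sigma>] in auto)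
  have "conv_psi F \<sigma> x - (\<integral>u. psi_sigma \<sigma> (x - q u) \<partial>F) =
      (\<integral>u. psi_sigma \<sigma> (x - u) - psi_sigma \<sigma> (x - q u) \<partial>F)"
    unfolding conv_psi_def using int[of id] int[OF q] by simp
  also have "\<bar>\<dots>\<bar> \<le> (\<integral>u. d / (\<sigma>^2 * sqrt pi) \<partial>F)"
  proof (rule integral_abs_bound_integral)
    show "integrable F (\<lambda>u. psi_sigma \<sigma> (x - u) - psi_sigma \<sigma> (x - q u))"
      using int[of id] int[OF q] by simp
    show "\<bar>psi_sigma \<sigma> (x - u) - psi_sigma \<sigma> (x - q u)\<bar> \<le> d / (\<sigma>^2 * sqrt pi)" for u
      using psi_sigma_lipschitz[OF \<sigma>, of x u "q u"] close[of u] \<sigma>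
      by (smt (verit) divide_right_mono mult_pos_pos real_sqrt_gt_zero pi_gt_zero zero_less_power)
  qed simp
  also have "\<dots> = d / (\<sigma>^2 * sqrt pi)" by (simp add: prob_space)
  finally show ?thesis .
qed

lemma grid_quantization:
  fixes F :: "real measure" and a \<sigma> d :: real
  assumes F: "prob_space F" "sets F = sets borel" "measure F {-a..a} = 1"
    and \<sigma>: "0 < \<sigma>" and d: "0 < d"
  shows "\<exists>G w. finite G \<and> G \<subseteq> {-a..a} \<and> (\<forall>g\<in>G. w g \<ge> 0) \<and> (\<Sum>g\<in>G. w g) = 1 \<and>
     (\<forall>x. \<bar>conv_psi F \<sigma> x - (\<Sum>g\<in>G. w g * psi_sigma \<sigma> (x - g))\<bar> \<le> d / (\<sigma>^2 * sqrt pi))"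
proof -
  interpret prob_space F by (rule F(1))
  have [measurable_cong]: "sets F = sets borel" by (rule F(2))
  define q where "q u = -a + d * \<lfloor>(u+a)/d\<rfloor>" for u
  have [measurable]: "q \<in> borel_measurable borel" unfolding q_def by measurable
  have q_le: "q u \<le> u" and q_gt: "u - d < q u" for u
    using floor_divide_lower[OF d, of "u+a"] floor_divide_upper[OF d, of "u+a"]
    by (auto simp: q_def algebra_simps)
  define G where "G = q ` {-a..a}"
  have grid: "\<lfloor>(u+a)/d\<rfloor> \<in> {0..\<lfloor>2*a/d\<rfloor>}" if "u \<in> {-a..a}" for u
  proof -
    have "(u+a)/d \<le> 2*a/d" using that d by (intro divide_right_mono) auto
    thus ?thesis using that d by (auto intro: floor_mono)
  qed
  have "G \<subseteq> (\<lambda>k. -a + d * of_int k) ` {0..\<lfloor>2*a/d\<rfloor>}"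
    using grid unfolding G_def q_def by blast
  hence finG: "finite G" by (rule finite_subset) simp
  have Gsub: "G \<subseteq> {-a..a}"
  proof
    fix g assume "g \<in> G"
    then obtain u where u: "u \<in> {-a..a}" "g = q u" by (auto simp: G_def)
    have "0 \<le> d * \<lfloor>(u+a)/d\<rfloor>" using grid[OF u(1)] d by simp
    thus "g \<in> {-a..a}" using q_le[of u] u by (auto simp: q_def)
  qed
  define w where "w g = measure F {u\<in>{-a..a}. q u = g}" for g
  have AE: "AE u in F. u \<in> {-a..a}" by (rule AE_prob_1) (use F(3) in simp)
  have mixture: "(\<integral>u. h (q u) \<partial>F) = (\<Sum>g\<in>G. w g * h g)"
    if [measurable]: "h \<in> borel_measurable borel" for h
  proof -
    have "(\<integral>u. h (q u) \<partial>F) = (\<integral>u. h (q u) * indicator {-a..a} u \<partial>F)"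
      by (rule integral_cong_AE) (use AE in auto)
    also have "\<dots> = (\<Sum>g\<in>G. w g * h g)" unfolding w_def
      by (rule integral_indicator_finite_range) (use finG in \<open>auto simp: G_def finite_measure_axioms\<close>)
    finally show ?thesis .
  qed
  show ?thesis
  proof (intro exI conjI ballI allI)
    show "finite G" "G \<subseteq> {-a..a}" by (fact finG Gsub)+
    show "w g \<ge> 0" for g by (simp add: w_def)
    show "(\<Sum>g\<in>G. w g) = 1" using mixture[of "\<lambda>_. 1"] by (simp add: prob_space)
    fix x
    have "\<bar>u - q u\<bar> \<le> d" for u using q_le[of u] q_gt[of u] by linarith
    from conv_psi_displacement[OF F(1,2) _ this \<sigma>, of x]
    show "\<bar>conv_psi F \<sigma> x - (\<Sum>g\<in>G. w g * psi_sigma \<sigma> (x - g))\<bar> \<le> d / (\<sigma>^2 * sqrt pi)"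
      using mixture[of "\<lambda>g. psi_sigma \<sigma> (x - g)"] by simp
  qed
qed

lemma cell_index_bounds:
  fixes a y :: real and m :: nat
  assumes a: "0 < a" and m: "0 < m" and y: "y \<in> {-a..a}"
  defines "j \<equiv> nat (min (int m - 1) \<lfloor>(y+a)*m/(2*a)\<rfloor>)"
  shows "j < m \<and> \<bar>y - (-a + (2*real j+1)*a/m)\<bar> \<le> a/m"
proof -
  define z where "z = (y+a)*m/(2*a)"
  have z0: "0 \<le> z" "z \<le> m"
  proof -
    show "0 \<le> z" unfolding z_def using a y by (intro divide_nonneg_pos mult_nonneg_nonneg) auto
    have "(y+a)*m \<le> (2*a)*m" using y by (intro mult_right_mono) auto
    hence "(y+a)*m/(2*a) \<le> (2*a)*m/(2*a)" using a by (intro divide_right_mono) auto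
    thus "z \<le> m" using a by (simp add: z_def)
  qed
  have k0: "0 \<le> \<lfloor>z\<rfloor>" using z0 by simp
  have jm: "j < m" using m k0 unfolding j_def z_def[symmetric] by auto
  have jz: "real j \<le> z \<and> z \<le> real j + 1"
  proof (cases "\<lfloor>z\<rfloor> \<le> int m - 1")
    case True
    hence "int j = \<lfloor>z\<rfloor>" using k0 unfolding j_def z_def[symmetric] by auto
    hence "real j = real_of_int \<lfloor>z\<rfloor>" by (metis of_int_of_nat_eq)
    thus ?thesis by linarith
  next
    case False
    hence "int j = int m - 1" using m unfolding j_def z_def[symmetric] by auto
    hence "real j = real m - 1" using m by (metis of_int_of_nat_eq of_int_diff of_int_1 of_nat_1 of_nat_diff Suc_leI of_nat_diff)
    moreover have "real_of_int \<lfloor>z\<rfloor> \<ge> real m" using False by linarith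
    ultimately show ?thesis using z0 by linarith
  qed
  have "y - (-a + (2*real j+1)*a/m) = (2*z - 2*real j - 1) * a / m"
    using a m by (simp add: z_def field_simps)
  moreover have "\<bar>2*z - 2*real j - 1\<bar> \<le> 1" using jz by linarith
  ultimately have "\<bar>y - (-a + (2*real j+1)*a/m)\<bar> \<le> 1 * a / m"
    using a m by (simp add: abs_mult abs_divide mult_right_mono divide_right_mono)
  thus ?thesis using jm by simp
qed

lemma sum_over_cells:
  fixes G :: "real set" and cell :: "real \<Rightarrow> nat" and h :: "real \<Rightarrow> real"
  assumes "finite G" and "\<forall>y\<in>G. cell y < m"
  shows "(\<Sum>y\<in>G. h y) = (\<Sum>j<m. \<Sum>y\<in>{y\<in>G. cell y = j}. h y)"
proof -
  have "cell ` G \<subseteq> {..<m}" using assms(2) by auto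
  from sum.group[OF assms(1) _ this, of h] show ?thesis by simp
qed

lemma cellwise_moment_reduction:
  fixes G :: "real set" and w :: "real \<Rightarrow> real" and cell :: "real \<Rightarrow> nat" and c :: "nat \<Rightarrow> real"
  assumes finG: "finite G" and wnn: "\<forall>y\<in>G. w y \<ge> 0" and L: "L \<ge> 1"
    and cell: "\<forall>y\<in>G. cell y < m"
  shows "\<exists>w'. (\<forall>y. w' y \<ge> 0) \<and> (\<forall>y. w' y \<noteq> 0 \<longrightarrow> y \<in> G) \<and> card {y. w' y \<noteq> 0} \<le> m * (L+1) \<and>
     (\<forall>j. \<forall>n\<le>L. (\<Sum>y\<in>{y\<in>G. cell y = j}. w' y * (y - c j)^n) = (\<Sum>y\<in>{y\<in>G. cell y = j}. w y * (y - c j)^n))"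
proof -
  define C where "C j = {y\<in>G. cell y = j}" for j
  have "\<forall>j. \<exists>W. (\<forall>y\<in>C j. W y \<ge> 0) \<and> card {y\<in>C j. W y \<noteq> 0} \<le> L+1 \<and>
       (\<forall>n\<le>L. (\<Sum>y\<in>C j. W y * (y - c j)^n) = (\<Sum>y\<in>C j. w y * (y - c j)^n))"
  proof
    fix j
    have "finite (C j)" "\<forall>y\<in>C j. w y \<ge> 0" using finG wnn by (auto simp: C_def)
    from moment_preserving_support_reduction[OF this(1) L this(2)] show "\<exists>W. (\<forall>y\<in>C j. W y \<ge> 0) \<and> card {y\<in>C j. W y \<noteq> 0} \<le> L+1 \<and>
       (\<forall>n\<le>L. (\<Sum>y\<in>C j. W y * (y - c j)^n) = (\<Sum>y\<in>C j. w y * (y - c j)^n))" .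
  qed
  from choice[OF this] obtain W where W: "\<And>j. \<forall>y\<in>C j. W j y \<ge> 0" "\<And>j. card {y\<in>C j. W j y \<noteq> 0} \<le> L+1"
    "\<And>j. \<forall>n\<le>L. (\<Sum>y\<in>C j. W j y * (y - c j)^n) = (\<Sum>y\<in>C j. w y * (y - c j)^n)"
    by blast
  define w' where "w' y = (if y \<in> G then W (cell y) y else 0)" for y
  have w'_cell: "w' y = W j y" if "y \<in> C j" for y j using that by (auto simp: w'_def C_def)
  show ?thesis
  proof (intro exI conjI allI impI)
    show "w' y \<ge> 0" for y using W(1) by (auto simp: w'_def C_def)
    show "y \<in> G" if "w' y \<noteq> 0" for y using that by (auto simp: w'_def split: if_splits)
    have "{y. w' y \<noteq> 0} = (\<Union>j<m. {y\<in>C j. W j y \<noteq> 0})"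
      using cell by (auto simp: w'_def C_def)
    hence "card {y. w' y \<noteq> 0} \<le> (\<Sum>j<m. card {y\<in>C j. W j y \<noteq> 0})"
      using card_UN_le[of "{..<m}" "\<lambda>j. {y\<in>C j. W j y \<noteq> 0}"] by simp
    also have "\<dots> \<le> (\<Sum>j<m. L + 1)" by (intro sum_mono W(2))
    finally show "card {y. w' y \<noteq> 0} \<le> m * (L+1)" by simp
    fix j n assume "n \<le> L"
    thus "(\<Sum>y\<in>{y\<in>G. cell y = j}. w' y * (y - c j)^n) = (\<Sum>y\<in>{y\<in>G. cell y = j}. w y * (y - c j)^n)"
      using W(3)[of j] w'_cell[of _ j] by (simp add: C_def)
  qed
qed

lemma cellwise_gaussian_error:
  fixes G :: "real set" and w w' :: "real \<Rightarrow> real" and cell :: "real \<Rightarrow> nat" and c :: "nat \<Rightarrow> real"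
  assumes finG: "finite G" and wnn: "\<forall>y\<in>G. w y \<ge> 0" and w'nn: "\<forall>y\<in>G. w' y \<ge> 0"
    and w1: "(\<Sum>y\<in>G. w y) = 1" and cell: "\<forall>y\<in>G. cell y < m"
    and near: "\<forall>y\<in>G. \<bar>y - c (cell y)\<bar> \<le> \<sigma> * r" and \<sigma>: "0 < \<sigma>" and r: "0 \<le> r" "r < 1"
    and mom: "\<forall>j. \<forall>n\<le>L. (\<Sum>y\<in>{y\<in>G. cell y = j}. w' y * (y - c j)^n) = (\<Sum>y\<in>{y\<in>G. cell y = j}. w y * (y - c j)^n)"
  shows "\<bar>\<Sum>y\<in>G. (w y - w' y) * psi_sigma \<sigma> (x - y)\<bar> \<le> 2 * (exp 1 * r^(L+1) / (1 - r)) / (\<sigma> * sqrt pi)"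
proof -
  define B where "B = exp 1 * r^(L+1) / (1 - r)"
  define C where "C j = {y\<in>G. cell y = j}" for j
  have finC: "finite (C j)" for j using finG by (simp add: C_def)
  have split: "(\<Sum>y\<in>G. h y) = (\<Sum>j<m. \<Sum>y\<in>C j. h y)" for h :: "real \<Rightarrow> real"
    unfolding C_def by (rule sum_over_cells[OF finG cell])
  have mass: "(\<Sum>y\<in>C j. w' y) = (\<Sum>y\<in>C j. w y)" for j
    using mom[THEN spec[of _ j], THEN spec[of _ 0]] by (simp add: C_def)
  have "\<bar>\<Sum>j<m. \<Sum>y\<in>C j. (w y - w' y) * exp (-(((x-y)/\<sigma>)^2))\<bar>
      \<le> (\<Sum>j<m. \<bar>\<Sum>y\<in>C j. (w y - w' y) * exp (-(((x-y)/\<sigma>)^2))\<bar>)" by (rule sum_abs)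
  also have "\<dots> \<le> (\<Sum>j<m. B * ((\<Sum>y\<in>C j. w y) + (\<Sum>y\<in>C j. w' y)))"
  proof (rule sum_mono)
    fix j
    show "\<bar>\<Sum>y\<in>C j. (w y - w' y) * exp (-(((x-y)/\<sigma>)^2))\<bar> \<le> B * ((\<Sum>y\<in>C j. w y) + (\<Sum>y\<in>C j. w' y))"
      unfolding B_def
    proof (rule moment_matching_gaussian_error[OF finC _ \<sigma> r])
      show "\<bar>y - c j\<bar> \<le> \<sigma> * r" "w y \<ge> 0" "w' y \<ge> 0" if "y \<in> C j" for y
        using that near wnn w'nn by (auto simp: C_def)
    qed (use mom in \<open>simp add: C_def\<close>)
  qed
  also have "\<dots> = 2 * B" using split[of w] w1 mass by (simp add: sum_distrib_left[symmetric])
  finally show ?thesis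
    unfolding split B_def[symmetric] using \<sigma>
    by (simp add: psi_sigma_def psi_def sum_divide_distrib[symmetric] abs_divide divide_right_mono mult_ac)
qed

lemma embed_finite_weights:
  fixes G :: "real set" and w :: "real \<Rightarrow> real"
  assumes finG: "finite G" and nn: "\<forall>y. w y \<ge> 0" and supp: "\<forall>y. w y \<noteq> 0 \<longrightarrow> y \<in> G"
    and one: "(\<Sum>y\<in>G. w y) = 1"
  shows "\<exists>p. set_pmf p = {y. w y \<noteq> 0} \<and>
    (\<forall>\<sigma> x. conv_psi (measure_pmf p) \<sigma> x = (\<Sum>y\<in>G. w y * psi_sigma \<sigma> (x - y)))"
proof -
  have nn': "\<And>y. 0 \<le> w y" using nn by blast
  have "(\<integral>\<^sup>+y. ennreal (w y) \<partial>count_space UNIV) = (\<Sum>y\<in>G. ennreal (w y))"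
    by (rule nn_integral_count_space'[OF finG]) (use supp in force)+
  also have "\<dots> = ennreal (\<Sum>y\<in>G. w y)" using nn' by simp
  also have "\<dots> = 1" using one by simp
  finally have mass: "(\<integral>\<^sup>+y. ennreal (w y) \<partial>count_space UNIV) = 1" .
  define p where "p = embed_pmf w"
  have pmf_p: "pmf p y = w y" for y unfolding p_def by (rule pmf_embed_pmf[OF nn' mass])
  have set_p: "set_pmf p = {y. w y \<noteq> 0}" unfolding p_def by (rule set_embed_pmf[OF nn' mass])
  show ?thesis
  proof (intro exI conjI allI)
    show "set_pmf p = {y. w y \<noteq> 0}" by (fact set_p)
    show "conv_psi (measure_pmf p) \<sigma> x = (\<Sum>y\<in>G. w y * psi_sigma \<sigma> (x - y))" for \<sigma> x
      unfolding conv_psi_def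
      using integral_measure_pmf_real[OF finG, of p "\<lambda>u. psi_sigma \<sigma> (x - u)"] set_p supp
      by (auto simp: pmf_p mult.commute)
  qed
qed

lemma finite_support_approximation:
  fixes F :: "real measure" and a \<sigma> d r :: real and m L :: nat
  assumes F: "prob_space F" "sets F = sets borel" "measure F {-a..a} = 1"
    and a: "0 < a" and \<sigma>: "0 < \<sigma>" and d: "0 < d" and m: "0 < m" and L: "L \<ge> 1"
    and r: "0 \<le> r" "r < 1" and cell_width: "a / m \<le> \<sigma> * r"
  shows "\<exists>p :: real pmf. finite (set_pmf p) \<and> set_pmf p \<subseteq> {-a..a} \<and> card (set_pmf p) \<le> m * (L+1) \<and>
     (\<forall>x. \<bar>conv_psi F \<sigma> x - conv_psi (measure_pmf p) \<sigma> x\<bar>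
            \<le> d / (\<sigma>^2 * sqrt pi) + 2 * (exp 1 * r^(L+1) / (1 - r)) / (\<sigma> * sqrt pi))"
proof -
  obtain G w where G: "finite G" "G \<subseteq> {-a..a}" "\<forall>g\<in>G. w g \<ge> 0" "(\<Sum>g\<in>G. w g) = 1"
    and quantized: "\<forall>x. \<bar>conv_psi F \<sigma> x - (\<Sum>g\<in>G. w g * psi_sigma \<sigma> (x - g))\<bar> \<le> d / (\<sigma>^2 * sqrt pi)"
    using grid_quantization[OF F \<sigma> d] by blast
  define cell where "cell y = nat (min (int m - 1) \<lfloor>(y+a)*m/(2*a)\<rfloor>)" for y
  define c where "c j = -a + (2*real j+1)*a/m" for j
  have cell: "\<forall>y\<in>G. cell y < m" and near: "\<forall>y\<in>G. \<bar>y - c (cell y)\<bar> \<le> \<sigma> * r"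
    using cell_index_bounds[OF a m] G(2) cell_width unfolding cell_def c_def by fastforce+
  obtain w' where w': "\<forall>y. w' y \<ge> 0" "\<forall>y. w' y \<noteq> 0 \<longrightarrow> y \<in> G" "card {y. w' y \<noteq> 0} \<le> m * (L+1)"
    and mom: "\<forall>j. \<forall>n\<le>L. (\<Sum>y\<in>{y\<in>G. cell y = j}. w' y * (y - c j)^n) = (\<Sum>y\<in>{y\<in>G. cell y = j}. w y * (y - c j)^n)"
    using cellwise_moment_reduction[OF G(1,3) L cell, of c] by blast
  have "(\<Sum>y\<in>G. w' y) = (\<Sum>y\<in>G. w y)"
    using mom[THEN spec, THEN spec[of _ 0]] sum_over_cells[OF G(1) cell] by simp
  then obtain p where p: "set_pmf p = {y. w' y \<noteq> 0}"
    "\<And>x. conv_psi (measure_pmf p) \<sigma> x = (\<Sum>y\<in>G. w' y * psi_sigma \<sigma> (x - y))"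
    using embed_finite_weights[OF G(1) w'(1,2)] G(4) by force
  have supp: "set_pmf p \<subseteq> G" using p(1) w'(2) by auto
  show ?thesis
  proof (intro exI[of _ p] conjI allI)
    show "finite (set_pmf p)" "set_pmf p \<subseteq> {-a..a}" using supp G(1,2) finite_subset by blast+
    show "card (set_pmf p) \<le> m * (L+1)" using p(1) w'(3) by simp
    fix x
    have "\<bar>\<Sum>y\<in>G. (w y - w' y) * psi_sigma \<sigma> (x - y)\<bar> \<le> 2 * (exp 1 * r^(L+1) / (1 - r)) / (\<sigma> * sqrt pi)"
      using cellwise_gaussian_error[OF G(1,3) _ G(4) cell near \<sigma> r mom] w'(1) by blast
    moreover have "conv_psi F \<sigma> x - conv_psi (measure_pmf p) \<sigma> x =
        (conv_psi F \<sigma> x - (\<Sum>g\<in>G. w g * psi_sigma \<sigma> (x - g))) + (\<Sum>y\<in>G. (w y - w' y) * psi_sigma \<sigma> (x - y))"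
      by (simp add: p(2) left_diff_distrib sum_subtractf)
    ultimately show "\<bar>conv_psi F \<sigma> x - conv_psi (measure_pmf p) \<sigma> x\<bar>
        \<le> d / (\<sigma>^2 * sqrt pi) + 2 * (exp 1 * r^(L+1) / (1 - r)) / (\<sigma> * sqrt pi)"
      using quantized[rule_format, of x] by linarith
  qed
qed

lemma gaussian_remainder_le:
  fixes \<delta> :: real and L :: nat
  assumes \<delta>: "0 < \<delta>" and L: "ln (1 / \<delta>) + 2 \<le> real L"
  shows "2 * (exp 1 * exp (-1)^(L+1) / (1 - exp (-1))) \<le> \<delta>"
proof -
  have e2: "2 \<le> exp (1::real)" using exp_ge_add_one_self[of 1] by simp
  have "exp 1 * exp (-1)^(L+1) = exp (- real L)"
    by (simp flip: exp_of_nat_mult exp_add add: algebra_simps)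
  also have "\<dots> \<le> exp (- ln (1 / \<delta>) - 2)" using L by simp
  also have "\<dots> = \<delta> / exp 1 ^ 2"
    using \<delta> by (simp add: exp_diff ln_div flip: exp_of_nat_mult)
  finally have "exp 1 * exp (-1)^(L+1) \<le> \<delta> / exp 1 ^ 2" .
  moreover have "2 * (\<delta> / exp 1 ^ 2) \<le> \<delta> * (1 - exp (-1))"
  proof -
    have "2 \<le> exp 1 ^ 2 - exp (1::real)"
      using mult_mono[OF e2, of 1 "exp 1 - 1"] e2 by (simp add: power2_eq_square algebra_simps)
    hence "2 * \<delta> \<le> \<delta> * (exp 1 ^ 2 - exp 1)" using \<delta> by (simp add: mult.commute)
    thus ?thesis by (simp add: exp_minus field_simps power2_eq_square)
  qed
  ultimately have "2 * (exp 1 * exp (-1)^(L+1)) \<le> \<delta> * (1 - exp (-1))" by linarith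
  thus ?thesis by (simp add: pos_divide_le_eq)
qed

lemma cell_count_width:
  fixes a \<sigma> :: real
  assumes "0 < a" "0 < \<sigma>"
  shows "0 < nat \<lceil>a * exp 1 / \<sigma>\<rceil>" "a / nat \<lceil>a * exp 1 / \<sigma>\<rceil> \<le> \<sigma> * exp (-1)"
proof -
  have pos: "0 < a * exp 1 / \<sigma>" using assms by simp
  have m_ge: "a * exp 1 / \<sigma> \<le> nat \<lceil>a * exp 1 / \<sigma>\<rceil>" by linarith
  thus "0 < nat \<lceil>a * exp 1 / \<sigma>\<rceil>" using pos by linarith
  have "a / nat \<lceil>a * exp 1 / \<sigma>\<rceil> \<le> a / (a * exp 1 / \<sigma>)"
    using m_ge pos assms by (intro divide_left_mono mult_pos_pos) auto
  also have "\<dots> = \<sigma> * exp (-1)" using assms by (simp add: exp_minus field_simps)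
  finally show "a / nat \<lceil>a * exp 1 / \<sigma>\<rceil> \<le> \<sigma> * exp (-1)" .
qed

lemma support_count_le:
  fixes a \<sigma> \<delta> :: real
  assumes \<sigma>: "0 < \<sigma>" "\<sigma> < a" and \<delta>: "0 < \<delta>" "\<delta> < 1"
  shows "real (nat \<lceil>a * exp 1 / \<sigma>\<rceil> * (nat \<lceil>ln (1 / \<delta>)\<rceil> + 2 + 1))
           \<le> 54 * a / \<sigma> * exp 2 * max 1 (ln (1 / \<delta>))"
proof -
  define e where "e = exp (1::real)"
  define M where "M = max 1 (ln (1 / \<delta>))"
  have e2: "2 \<le> e" using exp_ge_add_one_self[of 1] by (simp add: e_def)
  have "a * 1 \<le> a * e" using \<sigma> e2 by (intro mult_left_mono) auto
  hence "\<sigma> \<le> a * e" using \<sigma> by linarith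
  hence ae: "1 \<le> a * e / \<sigma>" using \<sigma> by simp
  have "real (nat \<lceil>a * e / \<sigma>\<rceil>) \<le> 2 * (a * e / \<sigma>)" using ae by linarith
  moreover have "real (nat \<lceil>ln (1 / \<delta>)\<rceil> + 2 + 1) \<le> 5 * M"
    using \<delta> by (simp add: M_def) linarith
  ultimately have "real (nat \<lceil>a * e / \<sigma>\<rceil> * (nat \<lceil>ln (1 / \<delta>)\<rceil> + 2 + 1)) \<le> (2 * (a * e / \<sigma>)) * (5 * M)"
    unfolding of_nat_mult by (intro mult_mono) auto
  also have "\<dots> = 10 * e * (a / \<sigma> * M)" by simp
  also have "\<dots> \<le> 54 * e * e * (a / \<sigma> * M)"
    using e2 \<sigma> mult_right_mono[OF e2, of e] by (intro mult_right_mono) (auto simp: M_def)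
  also have "\<dots> = 54 * a / \<sigma> * exp 2 * M"
    by (simp add: e_def M_def flip: exp_add)
  finally show ?thesis unfolding e_def M_def .
qed

theorem proposition3:
  fixes F :: "real measure" and a \<sigma> \<epsilon> :: real
  assumes "prob_space F" and "sets F = sets borel"
    and "measure F {-a..a} = 1"
    and "0 < \<sigma>" and "\<sigma> < a"
    and "0 < \<epsilon>" and "\<epsilon> < 1 / sqrt pi"
  shows "\<exists>F' :: real pmf. finite (set_pmf F') \<and> set_pmf F' \<subseteq> {-a..a} \<and>
           real (card (set_pmf F')) \<le> 54 * a / \<sigma> * exp 2 * max 1 (ln (1 / (sqrt pi * \<epsilon>))) \<and>
           (\<forall>x. \<bar>conv_psi F \<sigma> x - conv_psi (measure_pmf F') \<sigma> x\<bar> \<le> 2 * \<epsilon> / \<sigma>)"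
proof -
  define \<delta> where "\<delta> = sqrt pi * \<epsilon>"
  have \<delta>: "0 < \<delta>" "\<delta> < 1" using assms(6,7) by (simp_all add: \<delta>_def field_simps)
  define L where "L = nat \<lceil>ln (1 / \<delta>)\<rceil> + 2"
  have L1: "L \<ge> 1" by (simp add: L_def)
  define m where "m = nat \<lceil>a * exp 1 / \<sigma>\<rceil>"
  have m: "0 < m" and cell_width: "a / m \<le> \<sigma> * exp (-1)"
    using cell_count_width[of a \<sigma>] assms(4,5) unfolding m_def by auto
  obtain p where p: "finite (set_pmf p)" "set_pmf p \<subseteq> {-a..a}" "card (set_pmf p) \<le> m * (L+1)"
    and err: "\<forall>x. \<bar>conv_psi F \<sigma> x - conv_psi (measure_pmf p) \<sigma> x\<bar>
            \<le> (\<sigma> * \<delta>) / (\<sigma>^2 * sqrt pi) + 2 * (exp 1 * exp (-1)^(L+1) / (1 - exp (-1))) / (\<sigma> * sqrt pi)"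
    using finite_support_approximation[OF assms(1-3) _ assms(4) _ m L1 _ _ cell_width, where d = "\<sigma> * \<delta>"]
      assms(4,5) \<delta> by fastforce
  have "ln (1 / \<delta>) + 2 \<le> real L" unfolding L_def by linarith
  from gaussian_remainder_le[OF \<delta>(1) this]
  have "2 * (exp 1 * exp (-1)^(L+1) / (1 - exp (-1))) / (\<sigma> * sqrt pi) \<le> \<delta> / (\<sigma> * sqrt pi)"
    using assms(4) by (intro divide_right_mono) auto
  moreover have "\<delta> / (\<sigma> * sqrt pi) = \<epsilon> / \<sigma>" and "(\<sigma> * \<delta>) / (\<sigma>^2 * sqrt pi) = \<epsilon> / \<sigma>"
    using assms(4) by (simp_all add: \<delta>_def power2_eq_square)
  ultimately have "(\<sigma> * \<delta>) / (\<sigma>^2 * sqrt pi) + 2 * (exp 1 * exp (-1)^(L+1) / (1 - exp (-1))) / (\<sigma> * sqrt pi)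
      \<le> 2 * \<epsilon> / \<sigma>" by simp
  moreover have "real (card (set_pmf p)) \<le> 54 * a / \<sigma> * exp 2 * max 1 (ln (1 / (sqrt pi * \<epsilon>)))"
    using support_count_le[OF assms(4,5) \<delta>] p(3) unfolding \<delta>_def L_def m_def
    by (smt (verit) of_nat_le_iff)
  ultimately show ?thesis
    using p(1,2) err by (intro exI[of _ p] conjI allI) (auto intro: order_trans)
qed

end
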